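(* Let $\gamma$ be a $\tau$-admissible Borel probability measure on $M$. If $p_n\to p$ in $\overline{X}^S_\tau$, then $\hat p_n\to\hat p$ $\gamma$-almost everywhere on $M$.
   Context: $G$ connected complex semisimple Lie group, $K$ maximal compact, $X=G/K$; $\tau:G\to\mathrm{SL}(V)$ irreducible with finite kernel, $\langle\cdot,\cdot\rangle$ a $K$-invariant Hermitian product; $M\subset\mathbb P(V)$ the unique closed $G$-orbit. $\overline{X}^S_\tau$ is the closure in $\mathbb P(\mathcal H(V))$ ($\mathcal H(V)$ self-adjoint endomorphisms) of $\{[\tau(g)\tau(g)^*]:g\in G\}$; each point is $[A]$ with $A\ge0$. For $p=[A]$, $\hat p:M\dashrightarrow M$, $\hat p([v])=[\sqrt A\,v]$ for $[v]\notin\mathbb P(\ker A)$. $\gamma$ is $\tau$-admissible if $\gamma(H\cap M)=0$ for every hyperplane $H\subset\mathbb P(V)$. *)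

theory Defs
  imports "HOL-Probability.Probability_Measure" "HOL-Algebra.Group"
begin

text \<open>V = complex^'n with the standard Hermitian product (playing the role of the
K-invariant product); endomorphisms are complex^'n^'n.\<close>

type_synonym 'n cmat = "complex^'n^'n"

definition cinner :: "complex^('n::finite) \<Rightarrow> complex^'n \<Rightarrow> complex" where
  "cinner x y = (\<Sum>i\<in>UNIV. cnj (x$i) * y$i)"

definition adjoint_c :: "('n::finite) cmat \<Rightarrow> 'n cmat" where
  "adjoint_c A = (\<chi> i j. cnj (A$j$i))"

definition psd :: "('n::finite) cmat \<Rightarrow> bool" where
  "psd A \<longleftrightarrow> adjoint_c A = A \<and>
     (\<forall>x. Im (cinner x (A *v x)) = 0 \<and> Re (cinner x (A *v x)) \<ge> 0)"

definition psd_sqrt :: "('n::finite) cmat \<Rightarrow> 'n cmat" where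
  "psd_sqrt A = (THE B. psd B \<and> B ** B = A)"

text \<open>Point [v] of P(V), represented (homeomorphically) by the orthogonal projection onto the line.\<close>
definition lineP :: "complex^('n::finite) \<Rightarrow> 'n cmat" where
  "lineP v = (1 / (\<Sum>i\<in>UNIV. (cmod (v$i))\<^sup>2)) *\<^sub>R (\<chi> i j. v$i * cnj (v$j))"

text \<open>Point [A] of P(H(V)) for nonzero A \<ge> 0, represented by A / tr A.\<close>
definition normP :: "('n::finite) cmat \<Rightarrow> 'n cmat" where
  "normP A = (1 / Re (trace A)) *\<^sub>R A"

definition satake :: "('g, 'b) monoid_scheme \<Rightarrow> ('g \<Rightarrow> ('n::finite) cmat) \<Rightarrow> 'n cmat set" where
  "satake G \<tau> = closure {normP (\<tau> g ** adjoint_c (\<tau> g)) | g. g \<in> carrier G}"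

text \<open>For p=[A], hat p [v] = [sqrt A v]; in the projection model
  [sqrt A v] = S P S / tr(S P S) with S = sqrt A, P = lineP v. It is defined iff tr(S P S) \<noteq> 0,
  i.e. iff v \<notin> ker A.\<close>
definition hat_dom :: "('n::finite) cmat \<Rightarrow> 'n cmat \<Rightarrow> bool" where
  "hat_dom A P \<longleftrightarrow> trace (psd_sqrt A ** P ** psd_sqrt A) \<noteq> 0"

definition hat :: "('n::finite) cmat \<Rightarrow> 'n cmat \<Rightarrow> 'n cmat" where
  "hat A P = normP (psd_sqrt A ** P ** psd_sqrt A)"

definition hyperplaneP :: "complex^('n::finite) \<Rightarrow> 'n cmat set" where
  "hyperplaneP w = {lineP v | v. v \<noteq> 0 \<and> cinner w v = 0}"

definition admissible :: "('n::finite) cmat measure \<Rightarrow> 'n cmat set \<Rightarrow> bool" where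
  "admissible \<gamma> M \<longleftrightarrow> (\<forall>w. w \<noteq> 0 \<longrightarrow> emeasure \<gamma> (hyperplaneP w \<inter> M) = 0)"

definition csubspace :: "(complex^('n::finite)) set \<Rightarrow> bool" where
  "csubspace S \<longleftrightarrow> 0 \<in> S \<and> (\<forall>x\<in>S. \<forall>y\<in>S. x + y \<in> S) \<and> (\<forall>c. \<forall>x\<in>S. (\<chi> i. c * x$i) \<in> S)"

definition irreducible_rep :: "('g, 'b) monoid_scheme \<Rightarrow> ('g \<Rightarrow> ('n::finite) cmat) \<Rightarrow> bool" where
  "irreducible_rep G \<tau> \<longleftrightarrow> (\<forall>S. csubspace S \<and> (\<forall>g\<in>carrier G. \<forall>x\<in>S. \<tau> g *v x \<in> S)
      \<longrightarrow> S = {0} \<or> S = UNIV)"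

definition orbitP :: "('g, 'b) monoid_scheme \<Rightarrow> ('g \<Rightarrow> ('n::finite) cmat) \<Rightarrow> complex^'n \<Rightarrow> 'n cmat set" where
  "orbitP G \<tau> v = {lineP (\<tau> g *v v) | g. g \<in> carrier G}"

end

theory Submission
  imports Defs
begin

(* A point q of the Satake compactification is a positive semidefinite (psd) matrix
   of trace 1.  The map hat p [v] = [sqrt p v] is defined at [v] exactly when sqrt p v \<noteq> 0,
   i.e. when p v \<noteq> 0, and there it depends continuously on p, because the psd square root is
   a continuous function on psd matrices.  Since q \<noteq> 0 it has a nonzero column w = q e_j, and
   every v with q v = 0 satisfies <w, v> = (q v)_j = 0, so the bad set of lines lies in the
   hyperplane of w, which is gamma-null by admissibility. *)

section \<open>Entrywise matrix algebra\<close>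

lemma matrix_mult_nth: "((A::'a::semiring_1^'n::finite^'m) ** B) $ i $ j = (\<Sum>k\<in>UNIV. A$i$k * B$k$j)"
  by (simp add: matrix_matrix_mult_def)

lemma matrix_vector_mult_nth: "((A::'a::semiring_1^'n::finite^'m) *v x) $ i = (\<Sum>k\<in>UNIV. A$i$k * x$k)"
  by (simp add: matrix_vector_mult_def)

lemma matrix_add_rdistrib: "((A::'a::semiring_1^'n::finite^'m) + B) ** C = A ** C + B ** C"
  by (simp add: vec_eq_iff matrix_mult_nth distrib_right sum.distrib)

lemma matrix_diff_rdistrib: "((A::'a::ring_1^'n::finite^'m) - B) ** C = A ** C - B ** C"
  by (simp add: vec_eq_iff matrix_mult_nth left_diff_distrib sum_subtractf)

lemma matrix_diff_ldistrib: "(C::'a::ring_1^'n::finite^'m) ** (A - B) = C ** A - C ** B"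
  by (simp add: vec_eq_iff matrix_mult_nth right_diff_distrib sum_subtractf)

lemma matrix_sum_left:
  "finite I \<Longrightarrow> (\<Sum>i\<in>I. f i :: 'a::semiring_1^'n::finite^'m) ** B = (\<Sum>i\<in>I. f i ** B)"
  by (induct I rule: finite_induct) (auto simp: matrix_add_rdistrib)

lemma matrix_sum_right:
  "finite I \<Longrightarrow> (B :: 'a::semiring_1^'n::finite^'m) ** (\<Sum>i\<in>I. f i) = (\<Sum>i\<in>I. B ** f i)"
  by (induct I rule: finite_induct) (auto simp: matrix_add_ldistrib)

lemma matrix_vector_mult_sum:
  "finite I \<Longrightarrow> (\<Sum>i\<in>I. f i :: 'a::semiring_1^'n::finite^'m) *v x = (\<Sum>i\<in>I. f i *v x)"
  by (induct I rule: finite_induct) (auto simp: matrix_vector_mult_add_rdistrib)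

lemma complex_scaleR: "r *\<^sub>R (z::complex) = complex_of_real r * z"
  by (rule scaleR_conv_of_real)

lemma scaleR_matrix_vector_mult: "((r *\<^sub>R A)::complex^'n::finite^'m) *v x = r *\<^sub>R (A *v x)"
  unfolding vec_eq_iff matrix_vector_mult_nth vector_scaleR_component complex_scaleR
  by (simp add: sum_distrib_left mult.assoc)

lemma matrix_vector_mult_scaleR_right: "(A::complex^'n::finite^'m) *v (r *\<^sub>R x) = r *\<^sub>R (A *v x)"
  unfolding vec_eq_iff matrix_vector_mult_nth vector_scaleR_component complex_scaleR
  by (simp add: sum_distrib_left algebra_simps)

lemma scaleR_matrix_mult: "((r *\<^sub>R A)::complex^'n::finite^'m) ** B = r *\<^sub>R (A ** B)"
  by (rule scalar_matrix_assoc[symmetric])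

lemma matrix_mult_scaleR: "(A::complex^'n::finite^'m) ** (r *\<^sub>R B) = r *\<^sub>R (A ** B)"
  by (simp add: matrix_scalar_ac scalar_matrix_assoc)

lemma trace_scaleR: "trace (r *\<^sub>R (X::('n::finite) cmat)) = complex_of_real r * trace X"
  unfolding trace_def by (simp add: complex_scaleR sum_distrib_left)

section \<open>Adjoints and Hermitian forms\<close>

text \<open>The Hermitian form of a matrix A is x \<mapsto> x \<bullet> (A *v x), where \<open>\<bullet>\<close> is the real inner product of
  complex^'n, i.e. the real part of cinner.\<close>

definition hermitian :: "('n::finite) cmat \<Rightarrow> bool" where
  "hermitian A \<longleftrightarrow> adjoint_c A = A"

lemma adjoint_nth [simp]: "adjoint_c A $ i $ j = cnj (A $ j $ i)"
  by (simp add: adjoint_c_def)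

lemma adjoint_adjoint [simp]: "adjoint_c (adjoint_c A) = A"
  by (simp add: vec_eq_iff)

lemma adjoint_mult: "adjoint_c (A ** B) = adjoint_c B ** adjoint_c A"
  by (simp add: vec_eq_iff matrix_mult_nth mult.commute)

lemma adjoint_add: "adjoint_c (A + B) = adjoint_c A + adjoint_c B"
  by (simp add: vec_eq_iff)

lemma adjoint_diff: "adjoint_c (A - B) = adjoint_c A - adjoint_c B"
  by (simp add: vec_eq_iff)

lemma adjoint_scaleR: "adjoint_c (r *\<^sub>R A) = r *\<^sub>R adjoint_c A"
  unfolding vec_eq_iff adjoint_nth vector_scaleR_component complex_scaleR by simp

lemma adjoint_one: "adjoint_c (mat 1) = mat 1"
  by (simp add: vec_eq_iff mat_def)

lemma adjoint_sum: "finite I \<Longrightarrow> adjoint_c (\<Sum>i\<in>I. f i) = (\<Sum>i\<in>I. adjoint_c (f i))"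
proof (induct I rule: finite_induct)
  case empty
  show ?case by (simp add: vec_eq_iff)
qed (simp add: adjoint_add)

lemma hermitian_diff: "hermitian A \<Longrightarrow> hermitian B \<Longrightarrow> hermitian (A - B)"
  unfolding hermitian_def by (simp add: adjoint_diff)

lemma hermitian_scaleR: "hermitian A \<Longrightarrow> hermitian (r *\<^sub>R A)"
  unfolding hermitian_def by (simp add: adjoint_scaleR)

lemma cinner_Re: "Re (cinner x y) = x \<bullet> y"
  by (simp add: cinner_def inner_vec_def inner_complex_def)

lemma cinner_adjoint: "cinner x (A *v y) = cinner (adjoint_c A *v x) y"
proof -
  have "cinner x (A *v y) = (\<Sum>i\<in>UNIV. \<Sum>j\<in>UNIV. cnj (x$i) * A$i$j * y$j)"
    by (simp add: cinner_def matrix_vector_mult_nth sum_distrib_left mult.assoc)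
  also have "\<dots> = (\<Sum>j\<in>UNIV. \<Sum>i\<in>UNIV. cnj (x$i) * A$i$j * y$j)"
    by (rule sum.swap)
  also have "\<dots> = cinner (adjoint_c A *v x) y"
    unfolding cinner_def matrix_vector_mult_nth adjoint_nth cnj_sum sum_distrib_right
    by (intro sum.cong refl) (simp add: mult_ac)
  finally show ?thesis .
qed

lemma cinner_axis: "cinner (axis j 1) (z::complex^('n::finite)) = z $ j"
proof -
  have "\<And>m. cnj (axis j 1 $ m) * z $ m = (if m = j then z $ j else 0)" by (simp add: axis_def)
  thus ?thesis unfolding cinner_def by simp
qed

lemma cinner_scaleR: "cinner w (r *\<^sub>R v) = complex_of_real r * cinner w v"
  unfolding cinner_def by (simp add: complex_scaleR sum_distrib_left mult_ac)

lemma inner_adjoint: "x \<bullet> (A *v y) = (adjoint_c A *v x) \<bullet> y"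
  by (metis cinner_Re cinner_adjoint)

lemma hermitian_inner: "hermitian A \<Longrightarrow> x \<bullet> (A *v y) = (A *v x) \<bullet> y"
  by (simp add: inner_adjoint hermitian_def)

lemma hermitian_inner_sym: "hermitian A \<Longrightarrow> x \<bullet> (A *v y) = y \<bullet> (A *v x)"
  by (metis hermitian_inner inner_commute)

text \<open>The complex Hermitian form of a Hermitian matrix is real, so positive semidefiniteness
  only concerns its real part.\<close>

lemma hermitian_form_real: "hermitian A \<Longrightarrow> Im (cinner x (A *v x)) = 0"
proof -
  assume h: "hermitian A"
  have "cinner x (A *v x) = cinner (A *v x) x"
    using h by (simp add: cinner_adjoint hermitian_def)
  also have "\<dots> = cnj (cinner x (A *v x))"
    by (simp add: cinner_def mult.commute)
  finally have "Im (cinner x (A *v x)) = Im (cnj (cinner x (A *v x)))" by simp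
  thus ?thesis by simp
qed

lemma psd_iff: "psd A \<longleftrightarrow> hermitian A \<and> (\<forall>x. 0 \<le> x \<bullet> (A *v x))"
  using hermitian_form_real[of A] unfolding psd_def hermitian_def cinner_Re by auto

lemma psd_hermitian: "psd A \<Longrightarrow> hermitian A"
  by (simp add: psd_iff)

lemma psd_form_nonneg: "psd A \<Longrightarrow> 0 \<le> x \<bullet> (A *v x)"
  by (simp add: psd_iff)

lemma psd_scaleR: "psd A \<Longrightarrow> 0 \<le> r \<Longrightarrow> psd (r *\<^sub>R A)"
  unfolding psd_iff by (simp add: hermitian_scaleR scaleR_matrix_vector_mult)

lemma gram_psd: "psd (T ** adjoint_c T)"
proof -
  have "hermitian (T ** adjoint_c T)" unfolding hermitian_def by (simp add: adjoint_mult)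
  moreover have "x \<bullet> ((T ** adjoint_c T) *v x) = (adjoint_c T *v x) \<bullet> (adjoint_c T *v x)" for x
    by (simp add: inner_adjoint matrix_vector_mul_assoc[symmetric])
  ultimately show ?thesis by (simp add: psd_iff)
qed

lemma quadratic_form_expand:
  assumes "hermitian A"
  shows "(x + t *\<^sub>R y) \<bullet> (A *v (x + t *\<^sub>R y))
       = x \<bullet> (A *v x) + 2 * t * (y \<bullet> (A *v x)) + t^2 * (y \<bullet> (A *v y))"
  using hermitian_inner_sym[OF assms, of x y]
  by (simp add: matrix_vector_right_distrib matrix_vector_mult_scaleR_right inner_add_left
      inner_add_right power2_eq_square algebra_simps)

lemma nonneg_quadratic_discriminant:
  fixes a b c :: real
  assumes q: "\<forall>t. 0 \<le> c + 2 * b * t + a * t^2" and a: "0 \<le> a"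
  shows "b^2 \<le> a * c"
proof (cases "a = 0")
  case True
  have "b = 0"
  proof (rule ccontr)
    assume b: "b \<noteq> 0"
    have "\<forall>t. 0 \<le> c + 2 * b * t" using q True by simp
    hence "0 \<le> c + 2 * b * (- (\<bar>c\<bar> + 1) / (2 * b))" by blast
    also have "\<dots> = c - \<bar>c\<bar> - 1" using b by (simp add: field_simps)
    finally show False by linarith
  qed
  thus ?thesis using True by simp
next
  case False
  hence ap: "a > 0" using a by simp
  have "0 \<le> c + 2 * b * (- b / a) + a * (- b / a)^2" using q by blast
  also have "\<dots> = c - b^2 / a" using ap by (simp add: field_simps power2_eq_square)
  finally have "b^2 / a \<le> c" by simp
  thus ?thesis using ap by (simp add: field_simps mult.commute)
qed

lemma nonneg_quadratic_no_linear_term: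
  fixes a b :: real
  assumes "\<forall>t. 0 \<le> 2 * b * t + a * t^2"
  shows "b = 0"
proof -
  have a: "0 \<le> a" using assms[rule_format, of 1] assms[rule_format, of "-1"] by simp
  have "b^2 \<le> a * 0" using nonneg_quadratic_discriminant[of 0 b a] assms a by simp
  thus ?thesis by simp
qed

lemma psd_cauchy_schwarz:
  assumes p: "psd A"
  shows "(y \<bullet> (A *v x))^2 \<le> (y \<bullet> (A *v y)) * (x \<bullet> (A *v x))"
proof -
  have "\<forall>t. 0 \<le> x \<bullet> (A *v x) + 2 * (y \<bullet> (A *v x)) * t + (y \<bullet> (A *v y)) * t^2"
    using psd_form_nonneg[OF p, of "x + t *\<^sub>R y" for t]
    unfolding quadratic_form_expand[OF psd_hermitian[OF p]] by (simp add: algebra_simps)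
  thus ?thesis by (rule nonneg_quadratic_discriminant[OF _ psd_form_nonneg[OF p]])
qed

lemma psd_form_zero_imp_kernel:
  assumes "psd A" "x \<bullet> (A *v x) = 0"
  shows "A *v x = 0"
proof -
  have "((A *v x) \<bullet> (A *v x))^2 \<le> ((A *v x) \<bullet> (A *v (A *v x))) * 0"
    using psd_cauchy_schwarz[OF assms(1), of "A *v x" x] assms(2) by simp
  thus ?thesis by simp
qed

lemma hermitian_form_zero:
  assumes "hermitian A" "\<forall>x. x \<bullet> (A *v x) = 0"
  shows "A = 0"
proof -
  have "psd A" unfolding psd_iff using assms by simp
  hence "A *v x = 0" for x using psd_form_zero_imp_kernel assms(2) by blast
  thus ?thesis by (simp add: matrix_eq)
qed


section \<open>Uniqueness of psd square roots\<close>

lemma rayleigh_max_bound: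
  fixes D :: "('n::finite) cmat"
  assumes "norm x = 1" "\<forall>y. norm y = 1 \<longrightarrow> y \<bullet> (D *v y) \<le> x \<bullet> (D *v x)"
  shows "z \<bullet> (D *v z) \<le> (x \<bullet> (D *v x)) * (z \<bullet> z)"
proof (cases "z = 0")
  case True thus ?thesis by simp
next
  case False
  define u where "u = (1 / norm z) *\<^sub>R z"
  have nu: "norm u = 1" using False by (simp add: u_def)
  have z: "z = norm z *\<^sub>R u" using False by (simp add: u_def)
  have "z \<bullet> (D *v z) = (norm z)^2 * (u \<bullet> (D *v u))"
    by (subst (1 2) z) (simp add: matrix_vector_mult_scaleR_right power2_eq_square)
  also have "\<dots> \<le> (norm z)^2 * (x \<bullet> (D *v x))"
    using assms(2) nu by (simp add: mult_left_mono)
  also have "\<dots> = (x \<bullet> (D *v x)) * (z \<bullet> z)" by (simp add: power2_norm_eq_inner)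
  finally show ?thesis .
qed

lemma hermitian_top_eigenvector:
  fixes D :: "('n::finite) cmat"
  assumes h: "hermitian D"
  obtains x lam where "x \<noteq> 0" "D *v x = lam *\<^sub>R x" "\<And>z. z \<bullet> (D *v z) \<le> lam * (z \<bullet> z)"
proof -
  have "\<exists>x\<in>sphere 0 1. \<forall>y\<in>sphere 0 1. y \<bullet> (D *v y) \<le> x \<bullet> (D *v x)"
  proof (rule continuous_attains_sup)
    have "axis undefined 1 \<in> sphere (0::complex^'n) 1" by (simp add: norm_axis_1)
    thus "sphere (0::complex^'n) 1 \<noteq> {}" by blast
    show "continuous_on (sphere 0 1) (\<lambda>y. y \<bullet> (D *v y))"
      by (intro continuous_on_inner continuous_on_id matrix_vector_mult_linear_continuous_on)
  qed (rule compact_sphere)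
  then obtain x where nx: "norm x = 1" and mx: "\<forall>y. norm y = 1 \<longrightarrow> y \<bullet> (D *v y) \<le> x \<bullet> (D *v x)"
    by auto
  define lam where "lam = x \<bullet> (D *v x)"
  have bound: "z \<bullet> (D *v z) \<le> lam * (z \<bullet> z)" for z
    unfolding lam_def by (rule rayleigh_max_bound[OF nx mx])
  have xx: "x \<bullet> x = 1" using nx by (simp add: power2_norm_eq_inner[symmetric])
  have first_variation: "y \<bullet> (D *v x) = lam * (x \<bullet> y)" for y
  proof -
    have "\<forall>t. 0 \<le> 2 * (lam * (x \<bullet> y) - y \<bullet> (D *v x)) * t + (lam * (y \<bullet> y) - y \<bullet> (D *v y)) * t^2"
    proof
      fix t
      have "(x + t *\<^sub>R y) \<bullet> (D *v (x + t *\<^sub>R y)) \<le> lam * ((x + t *\<^sub>R y) \<bullet> (x + t *\<^sub>R y))"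
        by (rule bound)
      also have "(x + t *\<^sub>R y) \<bullet> (x + t *\<^sub>R y) = 1 + 2 * t * (x \<bullet> y) + t^2 * (y \<bullet> y)"
        using xx by (simp add: inner_add_left inner_add_right inner_commute power2_eq_square algebra_simps)
      finally show "0 \<le> 2 * (lam * (x \<bullet> y) - y \<bullet> (D *v x)) * t + (lam * (y \<bullet> y) - y \<bullet> (D *v y)) * t^2"
        unfolding quadratic_form_expand[OF h] lam_def[symmetric] by (simp add: algebra_simps)
    qed
    from nonneg_quadratic_no_linear_term[OF this] show ?thesis by simp
  qed
  have "y \<bullet> (D *v x - lam *\<^sub>R x) = 0" for y
    using first_variation by (simp add: inner_diff_right inner_commute)
  hence "D *v x = lam *\<^sub>R x" by (metis inner_eq_zero_iff eq_iff_diff_eq_0)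
  moreover have "x \<noteq> 0" using nx by auto
  ultimately show thesis using that bound by blast
qed

text \<open>If B and C are psd with equal squares, then B - C is negative semidefinite: on a top
  eigenvector x of B - C with eigenvalue lam, 0 = x \<bullet> ((B(B - C) + (B - C)C) x) equals
  lam (x \<bullet> Bx + x \<bullet> Cx), which forces lam \<le> 0.\<close>

lemma psd_equal_squares_diff_nonpos:
  fixes B C :: "('n::finite) cmat"
  assumes pB: "psd B" and pC: "psd C" and sq: "B ** B = C ** C"
  shows "y \<bullet> ((B - C) *v y) \<le> 0"
proof -
  define D where "D = B - C"
  have hD: "hermitian D" unfolding D_def using pB pC by (simp add: hermitian_diff psd_hermitian)
  obtain x lam where x0: "x \<noteq> 0" and ev: "D *v x = lam *\<^sub>R x"
    and bound: "\<And>z. z \<bullet> (D *v z) \<le> lam * (z \<bullet> z)"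
    using hermitian_top_eigenvector[OF hD] by blast
  have z: "B ** D + D ** C = 0"
    unfolding D_def by (simp add: matrix_diff_ldistrib matrix_diff_rdistrib sq)
  have "0 = x \<bullet> ((B ** D + D ** C) *v x)" by (simp add: z)
  also have "\<dots> = x \<bullet> (B *v (D *v x)) + x \<bullet> (D *v (C *v x))"
    by (simp add: matrix_vector_mult_add_rdistrib matrix_vector_mul_assoc inner_add_right)
  also have "x \<bullet> (D *v (C *v x)) = (D *v x) \<bullet> (C *v x)" by (rule hermitian_inner[OF hD])
  finally have eq: "lam * (x \<bullet> (B *v x) + x \<bullet> (C *v x)) = 0"
    unfolding ev by (simp add: matrix_vector_mult_scaleR_right distrib_left)
  have "lam \<le> 0"
  proof (rule ccontr)
    assume "\<not> lam \<le> 0"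
    hence "x \<bullet> (B *v x) + x \<bullet> (C *v x) = 0" using eq by simp
    hence "x \<bullet> (B *v x) = 0" "x \<bullet> (C *v x) = 0"
      using psd_form_nonneg[OF pB, of x] psd_form_nonneg[OF pC, of x] by linarith+
    hence "B *v x = 0" "C *v x = 0"
      using psd_form_zero_imp_kernel[OF pB] psd_form_zero_imp_kernel[OF pC] by blast+
    hence "D *v x = 0" unfolding D_def by (simp add: matrix_vector_mult_diff_rdistrib)
    thus False using ev x0 \<open>\<not> lam \<le> 0\<close> by simp
  qed
  hence "lam * (y \<bullet> y) \<le> 0" by (simp add: mult_nonpos_nonneg)
  thus ?thesis using bound[of y] unfolding D_def by linarith
qed

lemma psd_sqrt_unique:
  fixes B C :: "('n::finite) cmat"
  assumes pB: "psd B" and pC: "psd C" and sq: "B ** B = C ** C"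
  shows "B = C"
proof -
  have "y \<bullet> ((B - C) *v y) = 0" for y
  proof -
    have "y \<bullet> ((C - B) *v y) \<le> 0" by (rule psd_equal_squares_diff_nonpos[OF pC pB sq[symmetric]])
    hence "0 \<le> y \<bullet> ((B - C) *v y)" by (simp add: matrix_vector_mult_diff_rdistrib inner_diff_right)
    with psd_equal_squares_diff_nonpos[OF pB pC sq, of y] show ?thesis by linarith
  qed
  hence "B - C = 0"
    using hermitian_form_zero hermitian_diff psd_hermitian pB pC by blast
  thus ?thesis by simp
qed

section \<open>Limits of matrices\<close>

lemma tendsto_matrix_vector_mult:
  "(X \<longlongrightarrow> L) F \<Longrightarrow> ((\<lambda>k. (X k :: ('n::finite) cmat) *v y) \<longlongrightarrow> L *v y) F"
  by (intro vec_tendstoI) (simp add: matrix_vector_mult_nth, intro tendsto_sum tendsto_mult tendsto_const tendsto_vec_nth)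

lemma tendsto_matrix_mult:
  "(X \<longlongrightarrow> A) F \<Longrightarrow> (Y \<longlongrightarrow> B) F \<Longrightarrow> ((\<lambda>k. (X k :: ('n::finite) cmat) ** Y k) \<longlongrightarrow> A ** B) F"
  by (intro vec_tendstoI) (simp add: matrix_mult_nth, intro tendsto_sum tendsto_mult tendsto_vec_nth)

lemma tendsto_adjoint: "(X \<longlongrightarrow> A) F \<Longrightarrow> ((\<lambda>k. adjoint_c (X k :: ('n::finite) cmat)) \<longlongrightarrow> adjoint_c A) F"
  by (intro vec_tendstoI) (simp, intro tendsto_cnj tendsto_vec_nth)

lemma tendsto_trace: "(X \<longlongrightarrow> A) F \<Longrightarrow> ((\<lambda>k. trace (X k :: ('n::finite) cmat)) \<longlongrightarrow> trace A) F"
  unfolding trace_def by (intro tendsto_sum tendsto_vec_nth)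

lemma tendsto_form:
  "(X \<longlongrightarrow> L) F \<Longrightarrow> ((\<lambda>k. x \<bullet> ((X k :: ('n::finite) cmat) *v y)) \<longlongrightarrow> x \<bullet> (L *v y)) F"
  by (intro tendsto_inner tendsto_const tendsto_matrix_vector_mult)

lemma psd_limit:
  fixes X :: "nat \<Rightarrow> ('n::finite) cmat"
  assumes "\<forall>n. psd (X n)" "X \<longlonglongrightarrow> L"
  shows "psd L"
proof -
  have "(\<lambda>n. adjoint_c (X n)) = X" using assms(1) by (simp add: psd_iff hermitian_def)
  hence "X \<longlonglongrightarrow> adjoint_c L" using tendsto_adjoint[OF assms(2)] by simp
  hence "hermitian L" unfolding hermitian_def using assms(2) LIMSEQ_unique by metis
  moreover have "0 \<le> x \<bullet> (L *v x)" for x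
    by (rule tendsto_lowerbound[OF tendsto_form[OF assms(2)]]) (simp_all add: assms(1) psd_form_nonneg)
  ultimately show ?thesis unfolding psd_iff by blast
qed

lemma polarization:
  assumes "hermitian H"
  shows "a \<bullet> (H *v b) = ((a + b) \<bullet> (H *v (a + b)) - (a - b) \<bullet> (H *v (a - b))) / 4"
  using hermitian_inner_sym[OF assms, of b a]
  by (simp add: matrix_vector_right_distrib matrix_vector_mult_diff_distrib inner_add_left
      inner_add_right inner_diff_left inner_diff_right)

lemma matrix_vector_mult_axis: "((H::('n::finite) cmat) *v axis j 1) $ i = H $ i $ j"
proof -
  have "\<And>m. H $ i $ m * axis j 1 $ m = (if m = j then H $ i $ j else 0)" by (simp add: axis_def)
  thus ?thesis unfolding matrix_vector_mult_nth by simp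
qed

lemma inner_axis_left: "axis i c \<bullet> (v::complex^('n::finite)) = c \<bullet> v $ i"
proof -
  have "\<And>m. axis i c $ m \<bullet> v $ m = (if m = i then c \<bullet> v $ i else 0)" by (simp add: axis_def)
  thus ?thesis unfolding inner_vec_def by simp
qed

lemma matrix_entry_as_forms:
  "H $ i $ j = Complex (axis i 1 \<bullet> ((H::('n::finite) cmat) *v axis j 1)) (axis i \<i> \<bullet> (H *v axis j 1))"
proof -
  have "Re (H $ i $ j) = axis i 1 \<bullet> (H *v axis j 1)" "Im (H $ i $ j) = axis i \<i> \<bullet> (H *v axis j 1)"
    by (simp_all add: inner_axis_left matrix_vector_mult_axis inner_complex_def)
  thus ?thesis by (metis complex.collapse)
qed

text \<open>A sequence of Hermitian matrices converges as soon as all its Hermitian forms converge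
  (by polarization every bilinear form converges, hence every entry).\<close>

lemma hermitian_convergent_by_forms:
  fixes H :: "nat \<Rightarrow> ('n::finite) cmat"
  assumes h: "\<forall>k. hermitian (H k)" and c: "\<forall>x. convergent (\<lambda>k. x \<bullet> (H k *v x))"
  shows "convergent H"
proof -
  have bilinear: "convergent (\<lambda>k. a \<bullet> (H k *v b))" for a b
  proof -
    have polar: "(\<lambda>k. a \<bullet> (H k *v b))
        = (\<lambda>k. ((a + b) \<bullet> (H k *v (a + b)) - (a - b) \<bullet> (H k *v (a - b))) / 4)"
      using polarization h by blast
    have "(\<lambda>k. ((a + b) \<bullet> (H k *v (a + b)) - (a - b) \<bullet> (H k *v (a - b))) / 4) \<longlonglongrightarrow>
       (lim (\<lambda>k. (a + b) \<bullet> (H k *v (a + b))) - lim (\<lambda>k. (a - b) \<bullet> (H k *v (a - b)))) / 4"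
      using c[rule_format, of "a + b"] c[rule_format, of "a - b"]
      by (intro tendsto_divide tendsto_diff tendsto_const) (simp_all add: convergent_LIMSEQ_iff)
    thus ?thesis unfolding polar convergent_def by blast
  qed
  define L where "L = (\<chi> i j. Complex (lim (\<lambda>k. axis i 1 \<bullet> (H k *v axis j 1)))
                                       (lim (\<lambda>k. axis i \<i> \<bullet> (H k *v axis j 1))))"
  have "H \<longlonglongrightarrow> L"
  proof (rule vec_tendstoI, rule vec_tendstoI)
    fix i j
    have entry: "(\<lambda>k. H k $ i $ j)
        = (\<lambda>k. Complex (axis i 1 \<bullet> (H k *v axis j 1)) (axis i \<i> \<bullet> (H k *v axis j 1)))"
      by (rule ext) (rule matrix_entry_as_forms)
    show "(\<lambda>k. H k $ i $ j) \<longlonglongrightarrow> L $ i $ j"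
      unfolding entry L_def using bilinear[of "axis i 1" "axis j 1"] bilinear[of "axis i \<i>" "axis j 1"]
      by (simp, intro tendsto_Complex) (simp_all add: convergent_LIMSEQ_iff)
  qed
  thus ?thesis unfolding convergent_def by blast
qed


section \<open>Existence of psd square roots\<close>

primrec mat_pow :: "('n::finite) cmat \<Rightarrow> nat \<Rightarrow> 'n cmat" where
  "mat_pow B 0 = mat 1"
| "mat_pow B (Suc k) = B ** mat_pow B k"

lemma mat_pow_add: "mat_pow B (i + j) = mat_pow B i ** mat_pow B j"
  by (induct i) (simp_all add: matrix_mul_assoc)

lemma hermitian_mat_pow: "hermitian B \<Longrightarrow> hermitian (mat_pow B k)"
proof (induct k)
  case 0 thus ?case by (simp add: hermitian_def adjoint_one)
next
  case (Suc k)
  have "mat_pow B k ** B = B ** mat_pow B k"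
    using mat_pow_add[of B k 1] mat_pow_add[of B 1 k] by (simp add: add.commute)
  thus ?case using Suc unfolding hermitian_def by (simp add: adjoint_mult)
qed

text \<open>Powers of a psd matrix are psd: write B^k as B^m B^m or B^m B B^m.\<close>

lemma mat_pow_form_nonneg:
  assumes pB: "psd B"
  shows "0 \<le> x \<bullet> (mat_pow B k *v x)"
proof -
  have hm: "hermitian (mat_pow B m)" for m by (rule hermitian_mat_pow[OF psd_hermitian[OF pB]])
  have "\<exists>m. k = m + m \<or> k = m + Suc m" by presburger
  then obtain m where "k = m + m \<or> k = m + Suc m" by blast
  thus ?thesis
  proof
    assume k: "k = m + m"
    have "x \<bullet> (mat_pow B k *v x) = (mat_pow B m *v x) \<bullet> (mat_pow B m *v x)"
      unfolding k mat_pow_add matrix_vector_mul_assoc[symmetric] by (rule hermitian_inner[OF hm])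
    thus ?thesis by simp
  next
    assume k: "k = m + Suc m"
    have "x \<bullet> (mat_pow B k *v x) = (mat_pow B m *v x) \<bullet> (B *v (mat_pow B m *v x))"
      unfolding k mat_pow_add mat_pow.simps(2) matrix_vector_mul_assoc[symmetric]
      by (rule hermitian_inner[OF hm])
    thus ?thesis using psd_form_nonneg[OF pB] by (simp add: inner_commute)
  qed
qed

lemma mat_pow_form_le:
  assumes contr: "\<forall>x. norm (B *v x) \<le> norm x"
  shows "x \<bullet> (mat_pow B k *v x) \<le> x \<bullet> x"
proof -
  have norm_pow: "norm (mat_pow B k *v x) \<le> norm x"
  proof (induct k)
    case (Suc k)
    have "norm (mat_pow B (Suc k) *v x) = norm (B *v (mat_pow B k *v x))"
      by (simp add: matrix_vector_mul_assoc)
    also have "\<dots> \<le> norm (mat_pow B k *v x)" using contr by blast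
    finally show ?case using Suc by linarith
  qed simp
  have "x \<bullet> (mat_pow B k *v x) \<le> norm x * norm (mat_pow B k *v x)" by (rule norm_cauchy_schwarz)
  also have "\<dots> \<le> norm x * norm x" using norm_pow by (simp add: mult_left_mono)
  finally show ?thesis by (simp add: power2_norm_eq_inner[symmetric] power2_eq_square)
qed

definition power_cone :: "('n::finite) cmat \<Rightarrow> real \<Rightarrow> 'n cmat set" where
  "power_cone B s = {P. \<exists>w N. (\<forall>k. 0 \<le> w k) \<and> s = (\<Sum>k<N. w k) \<and> P = (\<Sum>k<N. w k *\<^sub>R mat_pow B k)}"

lemma sum_lessThan_pad:
  fixes f :: "nat \<Rightarrow> 'a::comm_monoid_add"
  assumes "N1 \<le> N" shows "(\<Sum>k<N. if k < N1 then f k else 0) = (\<Sum>k<N1. f k)"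
proof -
  have "(\<Sum>k<N. if k < N1 then f k else 0) = (\<Sum>k\<in>{..<N} \<inter> {k. k < N1}. f k)"
    by (simp add: sum.inter_restrict)
  also have "{..<N} \<inter> {k. k < N1} = {..<N1}" using assms by auto
  finally show ?thesis .
qed

lemma power_cone_zero: "0 \<in> power_cone B 0"
  unfolding power_cone_def by (rule CollectI, rule exI[of _ "\<lambda>k. 0"], rule exI[of _ 0]) simp

lemma power_cone_pow: "mat_pow B j \<in> power_cone B 1"
  unfolding power_cone_def
proof (rule CollectI, rule exI[of _ "\<lambda>k. if k = j then 1 else 0"], rule exI[of _ "Suc j"], intro conjI)
  have "(\<Sum>k<Suc j. (if k = j then 1 else 0) *\<^sub>R mat_pow B k) = (\<Sum>k<Suc j. if k = j then mat_pow B k else 0)"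
    by (intro sum.cong) auto
  thus "mat_pow B j = (\<Sum>k<Suc j. (if k = j then 1 else 0) *\<^sub>R mat_pow B k)" by simp
qed simp_all

lemma power_cone_base: "B \<in> power_cone B 1"
  using power_cone_pow[of B 1] by simp

lemma power_cone_add:
  assumes "P \<in> power_cone B s" "Q \<in> power_cone B t" shows "P + Q \<in> power_cone B (s + t)"
proof -
  obtain w1 N1 where 1: "\<forall>k. 0 \<le> w1 k" "s = (\<Sum>k<N1. w1 k)" "P = (\<Sum>k<N1. w1 k *\<^sub>R mat_pow B k)"
    using assms(1) unfolding power_cone_def by blast
  obtain w2 N2 where 2: "\<forall>k. 0 \<le> w2 k" "t = (\<Sum>k<N2. w2 k)" "Q = (\<Sum>k<N2. w2 k *\<^sub>R mat_pow B k)"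
    using assms(2) unfolding power_cone_def by blast
  define N where "N = N1 + N2"
  define w where "w k = (if k < N1 then w1 k else 0) + (if k < N2 then w2 k else 0)" for k
  have le: "N1 \<le> N" "N2 \<le> N" unfolding N_def by auto
  have "(\<Sum>k<N. w k) = (\<Sum>k<N. if k < N1 then w1 k else 0) + (\<Sum>k<N. if k < N2 then w2 k else 0)"
    unfolding w_def by (rule sum.distrib)
  hence s: "s + t = (\<Sum>k<N. w k)" by (simp only: sum_lessThan_pad[OF le(1)] sum_lessThan_pad[OF le(2)] 1(2) 2(2))
  have "(\<Sum>k<N. w k *\<^sub>R mat_pow B k)
      = (\<Sum>k<N. (if k < N1 then w1 k *\<^sub>R mat_pow B k else 0) + (if k < N2 then w2 k *\<^sub>R mat_pow B k else 0))"
    by (rule sum.cong) (auto simp: w_def scaleR_add_left)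
  also have "\<dots> = (\<Sum>k<N. if k < N1 then w1 k *\<^sub>R mat_pow B k else 0)
                 + (\<Sum>k<N. if k < N2 then w2 k *\<^sub>R mat_pow B k else 0)"
    by (rule sum.distrib)
  also have "\<dots> = P + Q" by (simp only: sum_lessThan_pad[OF le(1)] sum_lessThan_pad[OF le(2)] 1(3) 2(3))
  finally have p: "P + Q = (\<Sum>k<N. w k *\<^sub>R mat_pow B k)" ..
  have wp: "\<forall>k. 0 \<le> w k" unfolding w_def using 1(1) 2(1) by simp
  show ?thesis unfolding power_cone_def
    by (rule CollectI, rule exI[of _ w], rule exI[of _ N]) (intro conjI wp s p)
qed

lemma power_cone_scale:
  assumes "P \<in> power_cone B s" "0 \<le> r" shows "r *\<^sub>R P \<in> power_cone B (r * s)"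
proof -
  obtain w N where 1: "\<forall>k. 0 \<le> w k" "s = (\<Sum>k<N. w k)" "P = (\<Sum>k<N. w k *\<^sub>R mat_pow B k)"
    using assms(1) unfolding power_cone_def by blast
  have a: "\<forall>k. 0 \<le> r * w k" using 1(1) assms(2) by simp
  have b: "r * s = (\<Sum>k<N. r * w k)" unfolding 1(2) by (rule sum_distrib_left)
  have c: "r *\<^sub>R P = (\<Sum>k<N. (r * w k) *\<^sub>R mat_pow B k)"
    unfolding 1(3) by (simp only: scaleR_sum_right scaleR_scaleR)
  show ?thesis unfolding power_cone_def
    by (rule CollectI, rule exI[of _ "\<lambda>k. r * w k"], rule exI[of _ N]) (intro conjI a b c)
qed

lemma power_cone_sum:
  assumes "finite I" "\<forall>i\<in>I. P i \<in> power_cone B (s i)"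
  shows "(\<Sum>i\<in>I. P i) \<in> power_cone B (\<Sum>i\<in>I. s i)"
  using assms by (induct I rule: finite_induct) (auto intro: power_cone_zero power_cone_add)

lemma power_cone_product_expand:
  assumes "P \<in> power_cone B s" "Q \<in> power_cone B t"
  obtains w1 N1 w2 N2 where "\<forall>k. 0 \<le> w1 k" "\<forall>k. 0 \<le> w2 k" "s = (\<Sum>k<N1. w1 k)" "t = (\<Sum>k<N2. w2 k)"
    "P ** Q = (\<Sum>i<N1. \<Sum>j<N2. (w1 i * w2 j) *\<^sub>R mat_pow B (i + j))"
    "Q ** P = (\<Sum>j<N2. \<Sum>i<N1. (w2 j * w1 i) *\<^sub>R mat_pow B (j + i))"
proof -
  have expand: "(\<Sum>i<N1. a i *\<^sub>R mat_pow B i) ** (\<Sum>j<N2. b j *\<^sub>R mat_pow B j)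
      = (\<Sum>i<N1. \<Sum>j<N2. (a i * b j) *\<^sub>R mat_pow B (i + j))" for a b N1 N2
  proof -
    have "(\<Sum>i<N1. a i *\<^sub>R mat_pow B i) ** (\<Sum>j<N2. b j *\<^sub>R mat_pow B j)
        = (\<Sum>i<N1. a i *\<^sub>R (mat_pow B i ** (\<Sum>j<N2. b j *\<^sub>R mat_pow B j)))"
      by (simp only: matrix_sum_left[OF finite_lessThan] scaleR_matrix_mult)
    also have "\<dots> = (\<Sum>i<N1. a i *\<^sub>R (\<Sum>j<N2. mat_pow B i ** (b j *\<^sub>R mat_pow B j)))"
      by (simp only: matrix_sum_right[OF finite_lessThan])
    finally show ?thesis by (simp only: matrix_mult_scaleR scaleR_sum_right scaleR_scaleR mat_pow_add)
  qed
  obtain w1 N1 where 1: "\<forall>k. 0 \<le> w1 k" "s = (\<Sum>k<N1. w1 k)" "P = (\<Sum>k<N1. w1 k *\<^sub>R mat_pow B k)"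
    using assms(1) unfolding power_cone_def by blast
  obtain w2 N2 where 2: "\<forall>k. 0 \<le> w2 k" "t = (\<Sum>k<N2. w2 k)" "Q = (\<Sum>k<N2. w2 k *\<^sub>R mat_pow B k)"
    using assms(2) unfolding power_cone_def by blast
  show thesis by (rule that[OF 1(1) 2(1) 1(2) 2(2)]) (simp_all only: 1(3) 2(3) expand)
qed

lemma power_cone_mult:
  assumes "P \<in> power_cone B s" "Q \<in> power_cone B t" shows "P ** Q \<in> power_cone B (s * t)"
proof -
  obtain w1 N1 w2 N2 where e: "\<forall>k. 0 \<le> w1 k" "\<forall>k. 0 \<le> w2 k" "s = (\<Sum>k<N1. w1 k)" "t = (\<Sum>k<N2. w2 k)"
     "P ** Q = (\<Sum>i<N1. \<Sum>j<N2. (w1 i * w2 j) *\<^sub>R mat_pow B (i + j))"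
     "Q ** P = (\<Sum>j<N2. \<Sum>i<N1. (w2 j * w1 i) *\<^sub>R mat_pow B (j + i))"
    by (rule power_cone_product_expand[OF assms])
  have "(\<Sum>i<N1. \<Sum>j<N2. (w1 i * w2 j) *\<^sub>R mat_pow B (i + j)) \<in> power_cone B (\<Sum>i<N1. \<Sum>j<N2. w1 i * w2 j * 1)"
    using e(1,2) by (intro power_cone_sum ballI power_cone_scale power_cone_pow finite_lessThan) simp
  thus ?thesis using e by (simp add: sum_product)
qed

lemma power_cone_commute:
  assumes "P \<in> power_cone B s" "Q \<in> power_cone B t" shows "P ** Q = Q ** P"
proof -
  obtain w1 N1 w2 N2 where "\<forall>k. 0 \<le> w1 k" "\<forall>k. 0 \<le> w2 k" "s = (\<Sum>k<N1. w1 k)" "t = (\<Sum>k<N2. w2 k)"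
     and e: "P ** Q = (\<Sum>i<N1. \<Sum>j<N2. (w1 i * w2 j) *\<^sub>R mat_pow B (i + j))"
     "Q ** P = (\<Sum>j<N2. \<Sum>i<N1. (w2 j * w1 i) *\<^sub>R mat_pow B (j + i))"
    by (rule power_cone_product_expand[OF assms])
  show ?thesis unfolding e by (subst sum.swap) (simp add: add.commute mult.commute)
qed

lemma power_cone_form_bounds:
  assumes pB: "psd B" and contr: "\<forall>x. norm (B *v x) \<le> norm x" and P: "P \<in> power_cone B s"
  shows "hermitian P" "0 \<le> x \<bullet> (P *v x)" "x \<bullet> (P *v x) \<le> s * (x \<bullet> x)"
proof -
  obtain w N where 1: "\<forall>k. 0 \<le> w k" "s = (\<Sum>k<N. w k)" "P = (\<Sum>k<N. w k *\<^sub>R mat_pow B k)"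
    using P unfolding power_cone_def by blast
  show "hermitian P" unfolding 1(3) hermitian_def
    using hermitian_mat_pow[OF psd_hermitian[OF pB]] by (simp add: adjoint_sum adjoint_scaleR hermitian_def)
  have q: "x \<bullet> (P *v x) = (\<Sum>k<N. w k * (x \<bullet> (mat_pow B k *v x)))"
    unfolding 1(3) by (simp add: matrix_vector_mult_sum scaleR_matrix_vector_mult inner_sum_right)
  show "0 \<le> x \<bullet> (P *v x)" unfolding q using 1(1) mat_pow_form_nonneg[OF pB]
    by (intro sum_nonneg) simp
  have "x \<bullet> (P *v x) \<le> (\<Sum>k<N. w k * (x \<bullet> x))" unfolding q
    using 1(1) mat_pow_form_le[OF contr] by (intro sum_mono mult_left_mono) auto
  thus "x \<bullet> (P *v x) \<le> s * (x \<bullet> x)" using 1(2) by (simp add: sum_distrib_right)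
qed


text \<open>The iteration Y_0 = 0, Y_{k+1} = (B + Y_k^2)/2 stays in the cone of weight at most 1, and
  its increments stay in the cone, so for a psd contraction B it increases monotonically
  (in the sense of forms) and is bounded by the identity.\<close>

primrec sqrt_iteration :: "('n::finite) cmat \<Rightarrow> nat \<Rightarrow> 'n cmat" where
  "sqrt_iteration B 0 = 0"
| "sqrt_iteration B (Suc k) = (1/2) *\<^sub>R (B + sqrt_iteration B k ** sqrt_iteration B k)"

lemma sqrt_iteration_in_cone: "\<exists>s. 0 \<le> s \<and> s \<le> 1 \<and> sqrt_iteration B k \<in> power_cone B s"
proof (induct k)
  case 0 show ?case using power_cone_zero[of B] by (intro exI[of _ 0]) simp
next
  case (Suc k)
  then obtain s where s: "0 \<le> s" "s \<le> 1" "sqrt_iteration B k \<in> power_cone B s" by blast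
  have "sqrt_iteration B (Suc k) \<in> power_cone B ((1/2) * (1 + s * s))"
    unfolding sqrt_iteration.simps
    by (intro power_cone_scale power_cone_add power_cone_base power_cone_mult s(3)) simp
  moreover have "s * s \<le> 1" using s by (simp add: mult_le_one)
  ultimately show ?case using s by (intro exI[of _ "(1/2) * (1 + s * s)"]) auto
qed

lemma sqrt_iteration_increment_in_cone: "\<exists>s. sqrt_iteration B (Suc k) - sqrt_iteration B k \<in> power_cone B s"
proof (induct k)
  case 0
  show ?case using power_cone_scale[OF power_cone_base, of "1/2" B] by auto
next
  case (Suc k)
  define Y1 where "Y1 = sqrt_iteration B (Suc k)"
  define Y0 where "Y0 = sqrt_iteration B k"
  obtain d where d: "Y1 - Y0 \<in> power_cone B d" using Suc unfolding Y1_def Y0_def by blast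
  obtain s1 where s1: "Y1 \<in> power_cone B s1" using sqrt_iteration_in_cone unfolding Y1_def by blast
  obtain s0 where s0: "Y0 \<in> power_cone B s0" using sqrt_iteration_in_cone unfolding Y0_def by blast
  have "sqrt_iteration B (Suc (Suc k)) - sqrt_iteration B (Suc k) = (1/2) *\<^sub>R (Y1 ** Y1 - Y0 ** Y0)"
    unfolding Y1_def Y0_def by (simp add: algebra_simps)
  also have "Y1 ** Y1 - Y0 ** Y0 = (Y1 - Y0) ** (Y1 + Y0)"
    by (simp add: matrix_diff_rdistrib matrix_add_ldistrib power_cone_commute[OF s1 s0])
  finally have e: "sqrt_iteration B (Suc (Suc k)) - sqrt_iteration B (Suc k) = (1/2) *\<^sub>R ((Y1 - Y0) ** (Y1 + Y0))" .
  have "(1/2) *\<^sub>R ((Y1 - Y0) ** (Y1 + Y0)) \<in> power_cone B ((1/2) * (d * (s1 + s0)))"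
    using d s1 s0 by (intro power_cone_scale power_cone_mult power_cone_add) simp_all
  thus ?case unfolding e by blast
qed

lemma sqrt_iteration_forms:
  assumes pB: "psd B" and contr: "\<forall>x. norm (B *v x) \<le> norm x"
  shows "hermitian (sqrt_iteration B k)"
    and "x \<bullet> (sqrt_iteration B k *v x) \<le> x \<bullet> x"
    and "x \<bullet> (sqrt_iteration B k *v x) \<le> x \<bullet> (sqrt_iteration B (Suc k) *v x)"
proof -
  obtain s where s: "0 \<le> s" "s \<le> 1" "sqrt_iteration B k \<in> power_cone B s"
    using sqrt_iteration_in_cone by blast
  show "hermitian (sqrt_iteration B k)" by (rule power_cone_form_bounds(1)[OF pB contr s(3)])
  have "x \<bullet> (sqrt_iteration B k *v x) \<le> s * (x \<bullet> x)" by (rule power_cone_form_bounds(3)[OF pB contr s(3)])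
  also have "\<dots> \<le> x \<bullet> x" using s by (simp add: mult_left_le_one_le)
  finally show "x \<bullet> (sqrt_iteration B k *v x) \<le> x \<bullet> x" .
  obtain d where d: "sqrt_iteration B (Suc k) - sqrt_iteration B k \<in> power_cone B d"
    using sqrt_iteration_increment_in_cone by blast
  have "0 \<le> x \<bullet> ((sqrt_iteration B (Suc k) - sqrt_iteration B k) *v x)"
    by (rule power_cone_form_bounds(2)[OF pB contr d])
  thus "x \<bullet> (sqrt_iteration B k *v x) \<le> x \<bullet> (sqrt_iteration B (Suc k) *v x)"
    by (simp add: matrix_vector_mult_diff_rdistrib inner_diff_right)
qed

lemma sqrt_iteration_convergent:
  assumes pB: "psd B" and contr: "\<forall>x. norm (B *v x) \<le> norm x"
  shows "convergent (sqrt_iteration B)"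
proof (rule hermitian_convergent_by_forms)
  show "\<forall>k. hermitian (sqrt_iteration B k)" using sqrt_iteration_forms(1)[OF pB contr] by blast
  show "\<forall>x. convergent (\<lambda>k. x \<bullet> (sqrt_iteration B k *v x))"
  proof
    fix x :: "complex^'a"
    have "incseq (\<lambda>k. x \<bullet> (sqrt_iteration B k *v x))"
      by (rule incseq_SucI) (rule sqrt_iteration_forms(3)[OF pB contr])
    thus "convergent (\<lambda>k. x \<bullet> (sqrt_iteration B k *v x))"
      using sqrt_iteration_forms(2)[OF pB contr] incseq_convergent unfolding convergent_def by blast
  qed
qed

text \<open>The limit L of the iteration satisfies L = (B + L^2)/2 and 0 \<le> L \<le> 1, so
  S = 1 - L is psd with S^2 = 1 - 2L + L^2 = 1 - B.\<close>

lemma psd_sqrt_exists_contraction: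
  fixes B :: "('n::finite) cmat"
  assumes pB: "psd B" and contr: "\<forall>x. norm (B *v x) \<le> norm x"
  shows "\<exists>S. psd S \<and> S ** S = mat 1 - B"
proof -
  obtain L where YL: "sqrt_iteration B \<longlonglongrightarrow> L"
    using sqrt_iteration_convergent[OF pB contr] unfolding convergent_def by blast
  have "(\<lambda>k. sqrt_iteration B (Suc k)) \<longlonglongrightarrow> L" by (rule LIMSEQ_Suc[OF YL])
  moreover have "(\<lambda>k. sqrt_iteration B (Suc k)) \<longlonglongrightarrow> (1/2) *\<^sub>R (B + L ** L)"
    unfolding sqrt_iteration.simps by (intro tendsto_scaleR tendsto_const tendsto_add tendsto_matrix_mult YL)
  ultimately have fixed_point: "L = (1/2) *\<^sub>R (B + L ** L)" by (rule LIMSEQ_unique)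
  define S where "S = mat 1 - L"
  have "psd (mat 1 - sqrt_iteration B k)" for k
    using sqrt_iteration_forms[OF pB contr, where k=k]
    by (simp add: psd_iff hermitian_def adjoint_diff adjoint_one
        matrix_vector_mult_diff_rdistrib inner_diff_right)
  moreover have "(\<lambda>k. mat 1 - sqrt_iteration B k) \<longlonglongrightarrow> S"
    unfolding S_def by (intro tendsto_diff tendsto_const YL)
  ultimately have "psd S" by (intro psd_limit) auto
  have LL: "L ** L = 2 *\<^sub>R L - B"
  proof -
    have "2 *\<^sub>R L = B + L ** L" by (subst fixed_point) simp
    thus ?thesis by (simp add: algebra_simps)
  qed
  have "S ** S = mat 1 - L - (L - L ** L)"
    unfolding S_def by (simp add: matrix_diff_ldistrib matrix_diff_rdistrib)
  also have "\<dots> = mat 1 - B" unfolding LL by (simp add: algebra_simps scaleR_2)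
  finally show ?thesis using \<open>psd S\<close> by blast
qed

lemma psd_image_norm_bound:
  fixes A :: "('n::finite) cmat"
  assumes p: "psd A" and K: "K > 0" "\<And>x. norm (A *v x) \<le> K * norm x"
  shows "(A *v x) \<bullet> (A *v x) \<le> K * (x \<bullet> (A *v x))"
proof -
  define y where "y = A *v x"
  have "y \<bullet> (A *v y) \<le> norm y * norm (A *v y)" by (rule norm_cauchy_schwarz)
  also have "\<dots> \<le> norm y * (K * norm y)" using K(2) by (simp add: mult_left_mono)
  also have "\<dots> = K * (y \<bullet> y)" by (simp add: power2_norm_eq_inner[symmetric] power2_eq_square mult_ac)
  finally have Ay: "y \<bullet> (A *v y) \<le> K * (y \<bullet> y)" .
  have "(y \<bullet> y)^2 \<le> (y \<bullet> (A *v y)) * (x \<bullet> (A *v x))"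
    using psd_cauchy_schwarz[OF p, of y x] by (simp add: y_def)
  also have "\<dots> \<le> K * (y \<bullet> y) * (x \<bullet> (A *v x))"
    using Ay psd_form_nonneg[OF p] by (simp add: mult_right_mono)
  finally have le: "(y \<bullet> y) * (y \<bullet> y) \<le> (y \<bullet> y) * (K * (x \<bullet> (A *v x)))"
    by (simp add: power2_eq_square mult_ac)
  show ?thesis
  proof (cases "y \<bullet> y = 0")
    case True
    thus ?thesis using psd_form_nonneg[OF p, of x] K(1) unfolding y_def by simp
  next
    case False
    hence "0 < y \<bullet> y" by (simp add: order_less_le)
    thus ?thesis using le unfolding y_def by (simp add: mult_le_cancel_left_pos)
  qed
qed

text \<open>Every psd A can be rescaled so that 1 - cA is a psd contraction: take c = 1/K for a bound K
  on the operator norm, then norm ((1 - cA) x)^2 = norm x^2 - 2c (x \<bullet> Ax) + c^2 norm (Ax)^2 \<le> norm x^2.\<close>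

lemma psd_rescaled_contraction:
  fixes A :: "('n::finite) cmat"
  assumes p: "psd A"
  obtains c where "c > 0" "psd (mat 1 - c *\<^sub>R A)" "\<forall>x. norm ((mat 1 - c *\<^sub>R A) *v x) \<le> norm x"
proof -
  obtain K where K: "K > 0" "\<And>x. norm (A *v x) \<le> K * norm x"
    using linear_bounded_pos[OF matrix_vector_mul_linear] by blast
  define c where "c = 1 / K"
  have c: "c > 0" "c * K = 1" using K unfolding c_def by auto
  have Bx: "(mat 1 - c *\<^sub>R A) *v x = x - c *\<^sub>R (A *v x)" for x
    by (simp add: matrix_vector_mult_diff_rdistrib scaleR_matrix_vector_mult)
  have form_le: "c * (x \<bullet> (A *v x)) \<le> x \<bullet> x" for x
  proof -
    have "x \<bullet> (A *v x) \<le> norm x * norm (A *v x)" by (rule norm_cauchy_schwarz)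
    also have "\<dots> \<le> norm x * (K * norm x)" by (rule mult_left_mono[OF K(2) norm_ge_zero])
    also have "\<dots> = K * (x \<bullet> x)" by (simp add: power2_norm_eq_inner[symmetric] power2_eq_square mult_ac)
    finally have "c * (x \<bullet> (A *v x)) \<le> c * (K * (x \<bullet> x))" using c(1) by (simp add: mult_left_mono)
    thus ?thesis using c(2) by (simp add: mult.assoc[symmetric])
  qed
  have "hermitian (mat 1 - c *\<^sub>R A)"
    using psd_hermitian[OF p] by (intro hermitian_diff hermitian_scaleR) (simp_all add: hermitian_def adjoint_one)
  hence "psd (mat 1 - c *\<^sub>R A)" unfolding psd_iff Bx using form_le by (simp add: inner_diff_right)
  moreover have "norm ((mat 1 - c *\<^sub>R A) *v x) \<le> norm x" for x
  proof -
    have "(norm ((mat 1 - c *\<^sub>R A) *v x))^2 = x \<bullet> x - 2 * c * (x \<bullet> (A *v x)) + c^2 * ((A *v x) \<bullet> (A *v x))"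
      unfolding Bx power2_norm_eq_inner
      by (simp add: inner_diff_left inner_diff_right inner_commute[of "A *v x" x] power2_eq_square algebra_simps)
    also have "c^2 * ((A *v x) \<bullet> (A *v x)) \<le> c^2 * (K * (x \<bullet> (A *v x)))"
      by (rule mult_left_mono[OF psd_image_norm_bound[OF p K]]) simp
    also have "c^2 * (K * (x \<bullet> (A *v x))) = c * (x \<bullet> (A *v x))"
      using c(2) by (simp add: power2_eq_square mult.assoc[symmetric])
    finally have "(norm ((mat 1 - c *\<^sub>R A) *v x))^2 \<le> x \<bullet> x - c * (x \<bullet> (A *v x))" by simp
    also have "\<dots> \<le> (norm x)^2" using psd_form_nonneg[OF p, of x] c(1) by (simp add: power2_norm_eq_inner)
    finally show ?thesis by (rule power2_le_imp_le) simp
  qed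
  ultimately show thesis using that c(1) by blast
qed

lemma psd_sqrt_exists:
  fixes A :: "('n::finite) cmat"
  assumes p: "psd A"
  shows "\<exists>S. psd S \<and> S ** S = A"
proof -
  obtain c where c: "c > 0" "psd (mat 1 - c *\<^sub>R A)" "\<forall>x. norm ((mat 1 - c *\<^sub>R A) *v x) \<le> norm x"
    using psd_rescaled_contraction[OF p] by blast
  obtain S0 where S0: "psd S0" "S0 ** S0 = c *\<^sub>R A"
    using psd_sqrt_exists_contraction[OF c(2) c(3)] by auto
  define S where "S = (1 / sqrt c) *\<^sub>R S0"
  have "S ** S = (1 / c) *\<^sub>R (S0 ** S0)"
    unfolding S_def using c(1) by (simp add: scaleR_matrix_mult matrix_mult_scaleR real_sqrt_mult[symmetric])
  also have "\<dots> = A" using S0(2) c(1) by simp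
  finally show ?thesis using psd_scaleR[OF S0(1), of "1 / sqrt c"] c(1) unfolding S_def by auto
qed

lemma psd_sqrt:
  fixes A :: "('n::finite) cmat"
  assumes p: "psd A"
  shows "psd (psd_sqrt A)" "psd_sqrt A ** psd_sqrt A = A"
proof -
  obtain S where S: "psd S" "S ** S = A" using psd_sqrt_exists[OF p] by blast
  have "\<exists>!B. psd B \<and> B ** B = A"
    using S psd_sqrt_unique by metis
  hence "psd (psd_sqrt A) \<and> psd_sqrt A ** psd_sqrt A = A"
    unfolding psd_sqrt_def by (rule theI')
  thus "psd (psd_sqrt A)" "psd_sqrt A ** psd_sqrt A = A" by auto
qed


section \<open>Continuity of the psd square root\<close>

lemma bounded_seq_unique_subseq_limit:
  fixes f :: "nat \<Rightarrow> 'a::heine_borel"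
  assumes bounded: "bounded (range f)"
    and unique: "\<And>r l. strict_mono r \<Longrightarrow> (f \<circ> r) \<longlonglongrightarrow> l \<Longrightarrow> l = a"
  shows "f \<longlonglongrightarrow> a"
proof (rule ccontr)
  assume "\<not> f \<longlonglongrightarrow> a"
  then obtain e where e: "e > 0" "\<not> eventually (\<lambda>n. dist (f n) a < e) sequentially"
    unfolding tendsto_iff by blast
  hence "frequently (\<lambda>n. e \<le> dist (f n) a) sequentially"
    by (simp add: not_eventually not_less)
  hence "infinite {n. e \<le> dist (f n) a}"
    unfolding frequently_sequentially infinite_nat_iff_unbounded_le by simp
  then obtain r :: "nat \<Rightarrow> nat" where r: "strict_mono r" "\<forall>n. e \<le> dist (f (r n)) a"
    using infinite_enumerate by blast
  have "bounded (range (f \<circ> r))" by (rule bounded_subset[OF bounded]) auto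
  then obtain l s where s: "strict_mono s" "((f \<circ> r) \<circ> s) \<longlonglongrightarrow> l"
    using bounded_imp_convergent_subsequence by blast
  have "(f \<circ> (r \<circ> s)) \<longlonglongrightarrow> l" using s(2) by (simp only: o_assoc)
  hence "l = a" by (rule unique[OF strict_mono_o[OF r(1) s(1)]])
  hence "((f \<circ> r) \<circ> s) \<longlonglongrightarrow> a" using s(2) by simp
  hence "(\<lambda>n. dist (((f \<circ> r) \<circ> s) n) a) \<longlonglongrightarrow> 0" by (rule iffD1[OF tendsto_dist_iff])
  moreover have "eventually (\<lambda>n. e \<le> dist (((f \<circ> r) \<circ> s) n) a) sequentially"
    using r(2) by (simp add: always_eventually)
  ultimately have "e \<le> 0" by (rule tendsto_lowerbound) simp
  thus False using e(1) by simp
qed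

lemma norm_matrix_column_le: "norm ((A::('n::finite) cmat) *v axis j 1) \<le> of_nat CARD('n) * norm A"
proof -
  have "norm (A *v axis j 1) \<le> (\<Sum>i\<in>UNIV. norm ((A *v axis j 1) $ i))"
    unfolding norm_vec_def by (rule L2_set_le_sum) simp
  also have "\<dots> \<le> (\<Sum>i\<in>(UNIV::'n set). norm A)"
  proof (rule sum_mono)
    fix i
    have "norm ((A *v axis j 1) $ i) = norm (A $ i $ j)" by (simp add: matrix_vector_mult_axis)
    also have "\<dots> \<le> norm (A $ i)" by (rule Finite_Cartesian_Product.norm_nth_le)
    also have "\<dots> \<le> norm A" by (rule Finite_Cartesian_Product.norm_nth_le)
    finally show "norm ((A *v axis j 1) $ i) \<le> norm A" .
  qed
  finally show ?thesis by simp
qed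

text \<open>The square root is bounded in terms of the matrix: each column S e_j has squared norm
  e_j \<bullet> A e_j.\<close>

lemma psd_sqrt_norm_bound:
  fixes A :: "('n::finite) cmat"
  assumes p: "psd A"
  shows "norm (psd_sqrt A) \<le> of_nat CARD('n) * of_nat CARD('n) * sqrt (of_nat CARD('n) * norm A)"
proof -
  define S where "S = psd_sqrt A"
  have pS: "psd S" and sq: "S ** S = A" using psd_sqrt[OF p] unfolding S_def by auto
  define C where "C = of_nat CARD('n) * norm A"
  have column: "norm (S *v axis j 1) \<le> sqrt C" for j
  proof -
    have "(norm (S *v axis j 1))^2 = axis j 1 \<bullet> (S *v (S *v axis j 1))"
      unfolding power2_norm_eq_inner by (rule hermitian_inner[OF psd_hermitian[OF pS], symmetric])
    also have "\<dots> = axis j 1 \<bullet> (A *v axis j 1)" by (simp add: matrix_vector_mul_assoc sq)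
    also have "\<dots> \<le> norm (axis j (1::complex)) * norm (A *v axis j 1)" by (rule norm_cauchy_schwarz)
    also have "\<dots> \<le> C" unfolding C_def using norm_matrix_column_le[of A j] by (simp add: norm_axis_1)
    finally show ?thesis by (simp add: real_le_rsqrt)
  qed
  have entry: "norm (S $ i $ j) \<le> sqrt C" for i j
    using Finite_Cartesian_Product.norm_nth_le[of "S *v axis j 1" i] column[of j] by (simp add: matrix_vector_mult_axis)
  have "norm S \<le> (\<Sum>i\<in>UNIV. norm (S $ i))"
    unfolding norm_vec_def by (rule L2_set_le_sum) simp
  also have "\<dots> \<le> (\<Sum>i\<in>(UNIV::'n set). \<Sum>j\<in>(UNIV::'n set). sqrt C)"
  proof (rule sum_mono)
    fix i
    have "norm (S $ i) \<le> (\<Sum>j\<in>UNIV. norm (S $ i $ j))"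
      unfolding norm_vec_def by (rule L2_set_le_sum) simp
    also have "\<dots> \<le> (\<Sum>j\<in>(UNIV::'n set). sqrt C)" by (rule sum_mono) (rule entry)
    finally show "norm (S $ i) \<le> (\<Sum>j\<in>(UNIV::'n set). sqrt C)" .
  qed
  finally show ?thesis unfolding S_def C_def by simp
qed

text \<open>The psd square root is continuous on psd matrices: the roots of a convergent sequence are
  bounded, and every limit of a subsequence of roots is a psd square root of the limit.\<close>

lemma psd_sqrt_continuous:
  fixes p :: "nat \<Rightarrow> ('n::finite) cmat"
  assumes pp: "\<forall>n. psd (p n)" and pq: "psd q" and conv: "p \<longlonglongrightarrow> q"
  shows "(\<lambda>n. psd_sqrt (p n)) \<longlonglongrightarrow> psd_sqrt q"
proof (rule bounded_seq_unique_subseq_limit)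
  obtain Bd where Bd: "\<forall>n. norm (p n) \<le> Bd"
    using convergent_imp_bounded[OF conv] unfolding bounded_iff by auto
  show "bounded (range (\<lambda>n. psd_sqrt (p n)))" unfolding bounded_iff
  proof (intro exI ballI)
    fix y assume "y \<in> range (\<lambda>n. psd_sqrt (p n))"
    then obtain n where y: "y = psd_sqrt (p n)" by blast
    have "norm y \<le> of_nat CARD('n) * of_nat CARD('n) * sqrt (of_nat CARD('n) * norm (p n))"
      unfolding y by (rule psd_sqrt_norm_bound[OF pp[rule_format]])
    also have "\<dots> \<le> of_nat CARD('n) * of_nat CARD('n) * sqrt (of_nat CARD('n) * Bd)"
      using Bd by (intro mult_left_mono real_sqrt_le_mono) auto
    finally show "norm y \<le> of_nat CARD('n) * of_nat CARD('n) * sqrt (of_nat CARD('n) * Bd)" .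
  qed
  fix r l assume r: "strict_mono r" and lim: "((\<lambda>n. psd_sqrt (p n)) \<circ> r) \<longlonglongrightarrow> l"
  have "psd l" by (rule psd_limit[OF _ lim]) (simp add: psd_sqrt pp)
  have squares: "(\<lambda>n. ((\<lambda>n. psd_sqrt (p n)) \<circ> r) n ** ((\<lambda>n. psd_sqrt (p n)) \<circ> r) n) = p \<circ> r"
    by (simp add: psd_sqrt pp o_def)
  have "(p \<circ> r) \<longlonglongrightarrow> l ** l"
    unfolding squares[symmetric] by (rule tendsto_matrix_mult[OF lim lim])
  from this LIMSEQ_subseq_LIMSEQ[OF conv r] have "l ** l = q" by (rule LIMSEQ_unique)
  thus "l = psd_sqrt q" using psd_sqrt_unique[OF \<open>psd l\<close> psd_sqrt(1)[OF pq]] psd_sqrt(2)[OF pq] by simp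
qed


section \<open>Lines, hyperplanes and the Satake compactification\<close>

lemma sum_cmod_square: "(\<Sum>i\<in>UNIV. (cmod (v$i))^2) = (norm (v::complex^('n::finite)))^2"
  unfolding norm_vec_def L2_set_def by (simp add: sum_nonneg)

lemma lineP_norm: "lineP v = (1 / (norm v)^2) *\<^sub>R (\<chi> i j. v$i * cnj (v$j))"
  unfolding lineP_def sum_cmod_square ..

lemma lineP_scaleR:
  assumes "r \<noteq> 0" shows "lineP (r *\<^sub>R v) = lineP (v::complex^('n::finite))"
proof -
  have "(\<chi> i j. (r *\<^sub>R v)$i * cnj ((r *\<^sub>R v)$j)) = (r^2) *\<^sub>R (\<chi> i j. v$i * cnj (v$j))"
    unfolding vec_eq_iff by (simp add: complex_scaleR power2_eq_square mult_ac)
  thus ?thesis using assms unfolding lineP_norm by (simp add: power_mult_distrib)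
qed

text \<open>A projective hyperplane is closed: it is the continuous image of the compact set of unit
  vectors orthogonal to w.\<close>

lemma hyperplaneP_closed: "closed (hyperplaneP (w::complex^('n::finite)))"
proof -
  define K where "K = sphere (0::complex^'n) 1 \<inter> {v. cinner w v = 0}"
  have cinner_cont: "continuous_on UNIV (\<lambda>v. cinner w v)"
    unfolding cinner_def
    by (intro continuous_on_sum continuous_on_mult continuous_on_const continuous_on_component continuous_on_id)
  have "compact K" unfolding K_def
    by (intro compact_Int_closed compact_sphere closed_Collect_eq cinner_cont continuous_on_const)
  have "continuous_on K (\<lambda>v. \<chi> i j. v$i * cnj (v$j))"
    by (intro continuous_on_vec_lambda continuous_on_mult continuous_on_cnj continuous_on_component continuous_on_id)
  hence "continuous_on K lineP"
    by (rule continuous_on_cong[THEN iffD1, OF refl, rotated]) (simp add: K_def lineP_norm)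
  have "hyperplaneP w = lineP ` K"
  proof
    show "lineP ` K \<subseteq> hyperplaneP w" unfolding K_def hyperplaneP_def by auto
    show "hyperplaneP w \<subseteq> lineP ` K"
    proof
      fix x assume "x \<in> hyperplaneP w"
      then obtain v where v: "x = lineP v" "v \<noteq> 0" "cinner w v = 0" unfolding hyperplaneP_def by blast
      define u where "u = (1 / norm v) *\<^sub>R v"
      have "u \<in> K" unfolding K_def u_def using v(2,3) by (simp add: cinner_scaleR)
      moreover have "lineP u = x" unfolding u_def v(1) using v(2) by (intro lineP_scaleR) simp
      ultimately show "x \<in> lineP ` K" by blast
    qed
  qed
  thus ?thesis using compact_imp_closed[OF compact_continuous_image] \<open>continuous_on K lineP\<close> \<open>compact K\<close>
    by simp
qed

text \<open>The diagonal of S (v v*) S for Hermitian S is |(Sv)_i|^2, so the trace of the sandwich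
  S [v] S is |Sv|^2 / |v|^2.\<close>

lemma sandwich_rank_one_diag:
  fixes S :: "('n::finite) cmat"
  assumes h: "hermitian S"
  shows "(S ** (\<chi> i j. u$i * cnj (u$j)) ** S) $ i $ i = (S *v u)$i * cnj ((S *v u)$i)"
proof -
  have S_cnj: "S$l$i = cnj (S$i$l)" for l
    using h unfolding hermitian_def vec_eq_iff by (metis adjoint_nth)
  have "(S ** (\<chi> i j. u$i * cnj (u$j)) ** S) $ i $ i
      = (\<Sum>l\<in>UNIV. (\<Sum>k\<in>UNIV. S$i$k * (u$k * cnj (u$l))) * cnj (S$i$l))"
    by (simp add: matrix_mult_nth S_cnj)
  also have "\<dots> = (\<Sum>l\<in>UNIV. (\<Sum>k\<in>UNIV. S$i$k * u$k) * (cnj (S$i$l) * cnj (u$l)))"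
  proof (rule sum.cong[OF refl])
    fix l
    have "(\<Sum>k\<in>UNIV. S$i$k * (u$k * cnj (u$l))) = (\<Sum>k\<in>UNIV. S$i$k * u$k) * cnj (u$l)"
      by (simp only: sum_distrib_right mult.assoc)
    thus "(\<Sum>k\<in>UNIV. S$i$k * (u$k * cnj (u$l))) * cnj (S$i$l)
        = (\<Sum>k\<in>UNIV. S$i$k * u$k) * (cnj (S$i$l) * cnj (u$l))"
      by (simp only: mult.assoc mult.commute[of "cnj (u$l)"])
  qed
  also have "\<dots> = (S *v u)$i * cnj ((S *v u)$i)"
    by (simp only: sum_distrib_left cnj_sum complex_cnj_mult matrix_vector_mult_nth)
  finally show ?thesis .
qed

lemma trace_sandwich_lineP:
  fixes S :: "('n::finite) cmat"
  assumes h: "hermitian S"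
  shows "trace (S ** lineP u ** S) = complex_of_real ((norm (S *v u))^2 / (norm u)^2)"
proof -
  have "trace (S ** (\<chi> i j. u$i * cnj (u$j)) ** S) = (\<Sum>i\<in>UNIV. complex_of_real ((cmod ((S *v u)$i))^2))"
    unfolding trace_def sandwich_rank_one_diag[OF h] by (simp only: complex_norm_square)
  also have "\<dots> = complex_of_real ((norm (S *v u))^2)" by (simp only: of_real_sum[symmetric] sum_cmod_square)
  finally show ?thesis
    unfolding lineP_norm matrix_mult_scaleR scaleR_matrix_mult trace_scaleR by simp
qed

text \<open>Where [v] is not in the kernel of q, hat q is defined at [v] and hat p_n [v] \<rightarrow> hat q [v],
  since hat p [v] = S[v]S / tr(S[v]S) with S = psd_sqrt p depending continuously on p.\<close>

lemma hat_continuous_at_line: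
  fixes p :: "nat \<Rightarrow> ('n::finite) cmat"
  assumes pp: "\<forall>n. psd (p n)" and pq: "psd q" and conv: "p \<longlonglongrightarrow> q"
    and u: "u \<noteq> 0" and qu: "q *v u \<noteq> 0"
  shows "hat_dom q (lineP u) \<and> (\<lambda>n. hat (p n) (lineP u)) \<longlonglongrightarrow> hat q (lineP u)"
proof -
  define S where "S = psd_sqrt q"
  have "S *v (S *v u) \<noteq> 0" using qu psd_sqrt(2)[OF pq] by (simp add: S_def matrix_vector_mul_assoc)
  hence Su: "S *v u \<noteq> 0" by auto
  have tr: "trace (S ** lineP u ** S) = complex_of_real ((norm (S *v u))^2 / (norm u)^2)"
    by (rule trace_sandwich_lineP[OF psd_hermitian[OF psd_sqrt(1)[OF pq]], folded S_def])
  have Sn: "(\<lambda>n. psd_sqrt (p n)) \<longlonglongrightarrow> S" unfolding S_def by (rule psd_sqrt_continuous[OF pp pq conv])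
  have "(\<lambda>n. psd_sqrt (p n) ** lineP u ** psd_sqrt (p n)) \<longlonglongrightarrow> S ** lineP u ** S"
    by (intro tendsto_matrix_mult tendsto_const Sn)
  moreover from this have "(\<lambda>n. Re (trace (psd_sqrt (p n) ** lineP u ** psd_sqrt (p n))))
      \<longlonglongrightarrow> Re (trace (S ** lineP u ** S))"
    by (intro tendsto_Re tendsto_trace)
  moreover have "Re (trace (S ** lineP u ** S)) \<noteq> 0" unfolding tr using Su u by simp
  ultimately have "(\<lambda>n. normP (psd_sqrt (p n) ** lineP u ** psd_sqrt (p n))) \<longlonglongrightarrow> normP (S ** lineP u ** S)"
    unfolding normP_def by (intro tendsto_scaleR tendsto_divide tendsto_const)
  moreover have "hat_dom q (lineP u)"
    unfolding hat_dom_def S_def[symmetric] tr using Su u by simp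
  ultimately show ?thesis unfolding hat_def S_def by blast
qed

text \<open>Points of the Satake compactification are psd of trace 1: each normalised Gram matrix
  tau g tau g* is, and both properties pass to limits.\<close>

lemma normP_gram:
  fixes T :: "('n::finite) cmat"
  assumes "T \<noteq> 0"
  shows "psd (normP (T ** adjoint_c T))" "trace (normP (T ** adjoint_c T)) = 1"
proof -
  define t where "t = (\<Sum>i\<in>UNIV. \<Sum>k\<in>UNIV. (cmod (T$i$k))^2)"
  have "trace (T ** adjoint_c T) = (\<Sum>i\<in>UNIV. \<Sum>k\<in>UNIV. T$i$k * cnj (T$i$k))"
    unfolding trace_def by (simp add: matrix_mult_nth)
  also have "\<dots> = complex_of_real t" unfolding t_def by (simp only: of_real_sum complex_norm_square)
  finally have tr: "trace (T ** adjoint_c T) = complex_of_real t" .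
  obtain i k where ik: "T$i$k \<noteq> 0" using assms by (metis vec_eq_iff zero_index)
  have "0 < (\<Sum>k\<in>UNIV. (cmod (T$i$k))^2)" by (rule sum_pos2[of UNIV k]) (use ik in auto)
  hence "0 < t" unfolding t_def
    by (intro sum_pos2[of UNIV i, where f="\<lambda>i. \<Sum>k\<in>UNIV. (cmod (T$i$k))^2"]) (auto intro: sum_nonneg)
  have n: "normP (T ** adjoint_c T) = (1 / t) *\<^sub>R (T ** adjoint_c T)" unfolding normP_def tr by simp
  show "psd (normP (T ** adjoint_c T))" unfolding n using \<open>0 < t\<close> by (simp add: psd_scaleR gram_psd)
  show "trace (normP (T ** adjoint_c T)) = 1" unfolding n trace_scaleR tr using \<open>0 < t\<close>
    by (simp add: of_real_mult[symmetric] del: of_real_mult)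
qed

lemma satake_psd_trace:
  assumes SL: "\<forall>g\<in>carrier G. det (\<tau> g) = 1" and q: "q \<in> satake G \<tau>"
  shows "psd q" "trace q = 1"
proof -
  obtain X where X: "\<forall>n. X n \<in> {normP (\<tau> g ** adjoint_c (\<tau> g)) | g. g \<in> carrier G}" "X \<longlonglongrightarrow> q"
    using q unfolding satake_def closure_sequential by blast
  have "psd (X n) \<and> trace (X n) = 1" for n
  proof -
    obtain g where g: "g \<in> carrier G" "X n = normP (\<tau> g ** adjoint_c (\<tau> g))" using X(1) by blast
    have "\<tau> g \<noteq> 0" using SL g(1) by (metis det_0 mat_0 zero_neq_one)
    thus ?thesis using normP_gram[OF \<open>\<tau> g \<noteq> 0\<close>] g(2) by simp
  qed
  hence "\<forall>n. psd (X n)" "(\<lambda>n. trace (X n)) = (\<lambda>n. 1)" by auto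
  show "psd q" by (rule psd_limit) fact+
  show "trace q = 1" using tendsto_trace[OF X(2)] \<open>(\<lambda>n. trace (X n)) = (\<lambda>n. 1)\<close> LIMSEQ_const_iff by metis
qed

lemma orbitP_nonzero_line:
  assumes SL: "\<forall>g\<in>carrier G. det (\<tau> g) = 1" and v0: "v0 \<noteq> 0" and x: "x \<in> orbitP G \<tau> v0"
  obtains u where "u \<noteq> 0" "x = lineP u"
proof -
  obtain g where g: "g \<in> carrier G" "x = lineP (\<tau> g *v v0)" using x unfolding orbitP_def by blast
  have "invertible (\<tau> g)" using SL g(1) invertible_det_nz by force
  then obtain B where "B ** \<tau> g = mat 1" unfolding invertible_def by blast
  hence "B *v (\<tau> g *v v0) = v0" by (simp add: matrix_vector_mul_assoc)
  hence "\<tau> g *v v0 \<noteq> 0" using v0 by auto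
  thus thesis using that g(2) by blast
qed

text \<open>The kernel of a nonzero Hermitian q lies in a hyperplane: for a nonzero column w = q e_j,
  cinner w u = (q u)_j.\<close>

lemma kernel_in_hyperplane:
  fixes q :: "('n::finite) cmat"
  assumes h: "hermitian q" and q0: "q \<noteq> 0"
  obtains w where "w \<noteq> 0" "\<And>u. cinner w u \<noteq> 0 \<Longrightarrow> q *v u \<noteq> 0"
proof -
  obtain j where j: "q *v axis j 1 \<noteq> 0"
    using q0 by (metis matrix_vector_mult_axis vec_eq_iff zero_index)
  have "cinner (q *v axis j 1) u = (q *v u) $ j" for u
  proof -
    have "cinner (q *v axis j 1) u = cinner (adjoint_c q *v axis j 1) u"
      using h unfolding hermitian_def by simp
    also have "\<dots> = (q *v u) $ j" by (simp only: cinner_adjoint[symmetric] cinner_axis)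
    finally show ?thesis .
  qed
  thus thesis using that j by fastforce
qed

text \<open>Admissibility makes the trace of each hyperplane on M a null set; it is measurable because
  hyperplanes and M are closed.\<close>

lemma admissible_hyperplane_null:
  assumes adm: "admissible \<gamma> M" and borel: "sets \<gamma> = sets borel" and M: "closed M" and w: "w \<noteq> 0"
  shows "hyperplaneP w \<inter> M \<in> null_sets \<gamma>"
proof (rule null_setsI)
  show "hyperplaneP w \<inter> M \<in> sets \<gamma>"
    unfolding borel by (intro borel_closed closed_Int hyperplaneP_closed M)
  show "emeasure \<gamma> (hyperplaneP w \<inter> M) = 0" using adm w unfolding admissible_def by blast
qed


theorem lemma3p5:
  fixes G :: "'g monoid" and \<tau> :: "'g \<Rightarrow> ('n::finite) cmat"
    and M :: "'n cmat set" and \<gamma> :: "'n cmat measure"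
    and p :: "nat \<Rightarrow> 'n cmat" and q :: "'n cmat"
  assumes grp: "group G"
    and hom: "\<forall>g\<in>carrier G. \<forall>h\<in>carrier G. \<tau> (g \<otimes>\<^bsub>G\<^esub> h) = \<tau> g ** \<tau> h"
    and SL: "\<forall>g\<in>carrier G. det (\<tau> g) = 1"
    and fin_ker: "finite {g \<in> carrier G. \<tau> g = mat 1}"
    and irr: "irreducible_rep G \<tau>"
    and M_orbit: "\<exists>v0. v0 \<noteq> 0 \<and> M = orbitP G \<tau> v0"
    and M_closed: "closed M"
    and M_unique: "\<forall>v. v \<noteq> 0 \<and> closed (orbitP G \<tau> v) \<longrightarrow> orbitP G \<tau> v = M"
    and prob: "prob_space \<gamma>"
    and borel: "sets \<gamma> = sets borel"
    and onM: "emeasure \<gamma> M = 1"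
    and adm: "admissible \<gamma> M"
    and pn: "\<forall>n. p n \<in> satake G \<tau>"
    and q: "q \<in> satake G \<tau>"
    and conv: "p \<longlonglongrightarrow> q"
  shows "AE x in \<gamma>. x \<in> M \<longrightarrow> hat_dom q x \<and> (\<lambda>n. hat (p n) x) \<longlonglongrightarrow> hat q x"
proof -
  obtain v0 where v0: "v0 \<noteq> 0" "M = orbitP G \<tau> v0" using M_orbit by blast
  have pq: "psd q" "trace q = 1" and pp: "\<forall>n. psd (p n)"
    using satake_psd_trace[OF SL] q pn by auto
  have "q \<noteq> 0" using pq(2) by (auto simp: trace_def)
  then obtain w where w: "w \<noteq> 0" and ker: "\<And>u. cinner w u \<noteq> 0 \<Longrightarrow> q *v u \<noteq> 0"
    using kernel_in_hyperplane[OF psd_hermitian[OF pq(1)]] by blast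
  have "AE x in \<gamma>. x \<notin> hyperplaneP w \<inter> M"
    by (rule AE_not_in[OF admissible_hyperplane_null[OF adm borel M_closed w]])
  thus ?thesis
  proof (rule eventually_mono, intro impI)
    fix x assume off: "x \<notin> hyperplaneP w \<inter> M" and "x \<in> M"
    then obtain u where u: "u \<noteq> 0" "x = lineP u"
      using orbitP_nonzero_line[OF SL v0(1)] v0(2) by blast
    have "cinner w u \<noteq> 0" using off \<open>x \<in> M\<close> u unfolding hyperplaneP_def by blast
    thus "hat_dom q x \<and> (\<lambda>n. hat (p n) x) \<longlonglongrightarrow> hat q x"
      unfolding u(2) by (rule hat_continuous_at_line[OF pp pq(1) conv u(1) ker])
  qed
qed

end
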